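(* Let $\lambda$ be a partition, $R:=R_\lambda$, and let $\gamma$ be a gapless $R$-tuple. Then the $\lambda$-row end max tableau $M:=M_\lambda(\gamma)$ is a $\lambda$-key. Moreover, for each $h\in[r]$, setting $j:=\lambda_{q_{h+1}}$ (so that column $j+1$ has length $q_h$ and column $j$ has length $q_{h+1}$, column $0$ being the latent column when $j=0$), one has $M_{j+1}(q_h)=\gamma_{q_h}$, and if $s\ge0$ denotes the number of elements of $B(M_j)\setminus B(M_{j+1})$ that are less than $\gamma_{q_h}$, then these $s$ elements are exactly the $s$ largest elements of $[\gamma_{q_h}]\setminus B(M_{j+1})$.
   Context: Fix $n\ge1$; $[m]=\{1,\dots,m\}$. For $R\subseteq[n-1]$ with elements $q_1<\dots<q_r$, set $q_0:=0$, $q_{r+1}:=n$, $p_h:=q_h-q_{h-1}$; the $h$-th carrel is $\{q_{h-1}+1,\dots,q_h\}$. An $R$-tuple is an $n$-tuple with entries in $[n]$; it is upper if $\nu_i\ge i$ for all $i$ and $R$-increasing if strictly increasing on each carrel. A gapless $R$-tuple is an upper $R$-increasing $R$-tuple $\gamma$ such that whenever $h\in[r]$ has $\gamma_{q_h}>\gamma_{q_h+1}$, setting $s:=\gamma_{q_h}-\gamma_{q_h+1}+1$ one has $s\le p_{h+1}$ and $\gamma_{q_h+t}=\gamma_{q_h}-s+t$ for all $t\in[s]$. A partition is $\lambda=(\lambda_1\ge\cdots\ge\lambda_n\ge0)\in\mathbb{Z}^n$; its shape has boxes $(j,i)$ (column $j$, row $i$) with $1\le j\le\lambda_1$, $1\le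 i\le\zeta_j$, where $\zeta_j:=\#\{i:\lambda_i\ge j\}$ is the length of column $j$. $R_\lambda:=\{\zeta_j:j\in[\lambda_1],\zeta_j<n\}$. A tableau of shape $\lambda$ is a filling of the boxes with values in $[n]$, strictly increasing down each column and weakly increasing left to right along rows; $\mathcal{T}_\lambda$ is the set of these, partially ordered entrywise. $T_j(i)$ is the entry in column $j$, row $i$, and $B(T_j)$ is the set of entries of column $j$. By convention every tableau has a latent column $0$ with $T_0(i)=i$ for $i\in[n]$. A $\lambda$-key is $Y\in\mathcal{T}_\lambda$ with $B(Y_l)\supseteq B(Y_j)$ whenever $1\le l\le j\le\lambda_1$. The $\lambda$-row end list of $T\in\mathcal{T}_\lambda$ is the $n$-tuple $\omega$ with $\omega_i:=T_{\lambda_i}(i)$ (using the latent column if $\lambda_i=0$). For an upper $R_\lambda$-increasing $R_\lambda$-tuple $\alpha$, the set of $T\in\mathcal{T}_\lambda$ with $\lambda$-row end list $\alpha$ is nonempty and closed under entrywise maximum; its maximum element is the $\lambda$-row end max tableau $M_\lambda(\alpha)$. *)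

theory Defs
  imports Main
begin

(* Indices 1..n.  Tuples, partitions: functions nat => nat, only values on {1..n} matter. *)

definition is_partition :: "nat \<Rightarrow> (nat \<Rightarrow> nat) \<Rightarrow> bool" where
  "is_partition n lam \<longleftrightarrow> (\<forall>i. 1 \<le> i \<and> i < n \<longrightarrow> lam (i+1) \<le> lam i)"

definition zeta :: "nat \<Rightarrow> (nat \<Rightarrow> nat) \<Rightarrow> nat \<Rightarrow> nat" where
  "zeta n lam j = card {i \<in> {1..n}. j \<le> lam i}"

definition R_of :: "nat \<Rightarrow> (nat \<Rightarrow> nat) \<Rightarrow> nat set" where
  "R_of n lam = {zeta n lam j | j. j \<in> {1..lam 1} \<and> zeta n lam j < n}"

definition qq :: "nat \<Rightarrow> nat set \<Rightarrow> nat \<Rightarrow> nat" where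
  "qq n R h = (if h = 0 then 0 else if h \<le> card R then sorted_list_of_set R ! (h - 1) else n)"

definition pp :: "nat \<Rightarrow> nat set \<Rightarrow> nat \<Rightarrow> nat" where
  "pp n R h = qq n R h - qq n R (h - 1)"

definition upper_tuple :: "nat \<Rightarrow> (nat \<Rightarrow> nat) \<Rightarrow> bool" where
  "upper_tuple n nu \<longleftrightarrow> (\<forall>i \<in> {1..n}. nu i \<in> {1..n} \<and> i \<le> nu i)"

(* strictly increasing on each carrel: i, i+1 lie in the same carrel iff i \<notin> R *)
definition R_increasing :: "nat \<Rightarrow> nat set \<Rightarrow> (nat \<Rightarrow> nat) \<Rightarrow> bool" where
  "R_increasing n R nu \<longleftrightarrow> (\<forall>i. 1 \<le> i \<and> i < n \<and> i \<notin> R \<longrightarrow> nu i < nu (i+1))"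

definition gapless :: "nat \<Rightarrow> nat set \<Rightarrow> (nat \<Rightarrow> nat) \<Rightarrow> bool" where
  "gapless n R g \<longleftrightarrow> upper_tuple n g \<and> R_increasing n R g \<and>
     (\<forall>h \<in> {1..card R}. g (qq n R h) > g (qq n R h + 1) \<longrightarrow>
        (let s = g (qq n R h) - g (qq n R h + 1) + 1 in
          s \<le> pp n R (h+1) \<and>
          (\<forall>t \<in> {1..s}. g (qq n R h + t) = g (qq n R h) - s + t)))"

(* box (j,i): column j, row i *)
definition in_shape :: "nat \<Rightarrow> (nat \<Rightarrow> nat) \<Rightarrow> nat \<Rightarrow> nat \<Rightarrow> bool" where
  "in_shape n lam j i \<longleftrightarrow> 1 \<le> j \<and> j \<le> lam 1 \<and> 1 \<le> i \<and> i \<le> zeta n lam j"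

(* A tableau is T :: nat => nat => nat, T j i = entry in column j, row i.
   Canonical encoding: latent column 0 has T 0 i = i for i in [n]; all other
   positions outside the shape hold 0, so that tableaux of shape lam correspond
   bijectively to fillings of the shape. *)
definition tableau :: "nat \<Rightarrow> (nat \<Rightarrow> nat) \<Rightarrow> (nat \<Rightarrow> nat \<Rightarrow> nat) \<Rightarrow> bool" where
  "tableau n lam T \<longleftrightarrow>
     (\<forall>j i. \<not> in_shape n lam j i \<longrightarrow> T j i = (if j = 0 \<and> 1 \<le> i \<and> i \<le> n then i else 0)) \<and>
     (\<forall>j i. in_shape n lam j i \<longrightarrow> T j i \<in> {1..n}) \<and>
     (\<forall>j i. in_shape n lam j i \<and> in_shape n lam j (i+1) \<longrightarrow> T j i < T j (i+1)) \<and>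
     (\<forall>j i. in_shape n lam j i \<and> in_shape n lam (j+1) i \<longrightarrow> T j i \<le> T (j+1) i)"

definition tab_le :: "(nat \<Rightarrow> nat \<Rightarrow> nat) \<Rightarrow> (nat \<Rightarrow> nat \<Rightarrow> nat) \<Rightarrow> bool" where
  "tab_le T U \<longleftrightarrow> (\<forall>j i. T j i \<le> U j i)"

(* B(T_j): set of entries of column j (column 0 = latent column, length n) *)
definition col_set :: "nat \<Rightarrow> (nat \<Rightarrow> nat) \<Rightarrow> (nat \<Rightarrow> nat \<Rightarrow> nat) \<Rightarrow> nat \<Rightarrow> nat set" where
  "col_set n lam T j = (\<lambda>i. T j i) ` {1..zeta n lam j}"

definition is_key :: "nat \<Rightarrow> (nat \<Rightarrow> nat) \<Rightarrow> (nat \<Rightarrow> nat \<Rightarrow> nat) \<Rightarrow> bool" where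
  "is_key n lam Y \<longleftrightarrow> tableau n lam Y \<and>
     (\<forall>l j. 1 \<le> l \<and> l \<le> j \<and> j \<le> lam 1 \<longrightarrow> col_set n lam Y j \<subseteq> col_set n lam Y l)"

definition row_end_is :: "nat \<Rightarrow> (nat \<Rightarrow> nat) \<Rightarrow> (nat \<Rightarrow> nat \<Rightarrow> nat) \<Rightarrow> (nat \<Rightarrow> nat) \<Rightarrow> bool" where
  "row_end_is n lam T alpha \<longleftrightarrow> (\<forall>i \<in> {1..n}. T (lam i) i = alpha i)"

definition row_end_max :: "nat \<Rightarrow> (nat \<Rightarrow> nat) \<Rightarrow> (nat \<Rightarrow> nat) \<Rightarrow> (nat \<Rightarrow> nat \<Rightarrow> nat)" where
  "row_end_max n lam alpha = (THE M. tableau n lam M \<and> row_end_is n lam M alpha \<and>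
     (\<forall>T. tableau n lam T \<and> row_end_is n lam T alpha \<longrightarrow> tab_le T M))"

end

theory Submission
  imports Defs
begin

text \<open>The row end max tableau has an explicit description: in a column of length \<open>m\<close> its entry
  in row \<open>i\<close> is the minimum of \<open>\<gamma>\<^sub>k - (k - i)\<close> over \<open>i \<le> k \<le> m\<close>, the largest value allowed by
  strict increase down the column and by the row end bounds \<open>\<gamma>\<^sub>k\<close>. So a column only depends on
  its length, and it suffices to compare the columns of two consecutive lengths \<open>a = q\<^sub>h\<close> and
  \<open>b = q\<^sub>h\<^sub>+\<^sub>1\<close>. In rows \<open>i > a\<close> the longer column is \<open>\<gamma>\<close> itself; in rows \<open>i \<le> a\<close> it is the
  minimum of the shorter column and \<open>i + \<gamma>\<^sub>a\<^sub>+\<^sub>1 - (a + 1)\<close>. If \<open>\<gamma>\<close> rises at \<open>a\<close>, the two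
  columns agree in rows \<open>\<le> a\<close>. If it drops, gaplessness makes \<open>\<gamma>\<^sub>a\<^sub>+\<^sub>1, \<gamma>\<^sub>a\<^sub>+\<^sub>2, \<dots>\<close> run
  through consecutive values up to \<open>\<gamma>\<^sub>a\<close>, and this run fills in every value between a lowered
  entry and \<open>\<gamma>\<^sub>a\<close>: so the short column is contained in the long one, and the new entries below
  \<open>\<gamma>\<^sub>a\<close> lie above every value \<open>\<le> \<gamma>\<^sub>a\<close> missing from the long column.\<close>

section \<open>Partitions and column lengths\<close>

lemma partition_antimono:
  assumes "is_partition n lam" "1 \<le> i" "i \<le> i'" "i' \<le> n"
  shows "lam i' \<le> lam i"
  using assms(3,4)
proof (induction i' rule: dec_induct)
  case (step k)
  then have "lam (k+1) \<le> lam k" using assms(1,2) by (simp add: is_partition_def)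
  then show ?case using step by simp
qed simp

lemma zeta_rows:
  assumes "is_partition n lam"
  shows "{i \<in> {1..n}. j \<le> lam i} = {1..zeta n lam j}"
proof -
  let ?S = "{i \<in> {1..n}. j \<le> lam i}"
  have "?S = {1..card ?S}"
  proof (cases "?S = {}")
    case False
    have mS: "Max ?S \<in> ?S" using Max_in[of ?S] False by simp
    have eq: "?S = {1..Max ?S}"
    proof
      show "?S \<subseteq> {1..Max ?S}" using Max_ge[of ?S] by auto
      show "{1..Max ?S} \<subseteq> ?S"
        using mS partition_antimono[OF assms, of _ "Max ?S"] by (auto intro: order_trans)
    qed
    have "card ?S = Max ?S" by (subst eq) simp
    with eq show ?thesis by simp
  qed simp
  then show ?thesis by (simp add: zeta_def)
qed

lemma le_zeta_iff:
  assumes "is_partition n lam" "1 \<le> i" "i \<le> n"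
  shows "i \<le> zeta n lam j \<longleftrightarrow> j \<le> lam i"
  using zeta_rows[OF assms(1), of j] assms(2,3) by (auto simp: set_eq_iff)

lemma zeta_le: "zeta n lam j \<le> n"
  unfolding zeta_def by (rule order.trans[OF card_mono[of "{1..n}"]]) auto

lemma zeta_0: "zeta n lam 0 = n"
proof -
  have "{i \<in> {1..n}. 0 \<le> lam i} = {1..n}" by auto
  then show ?thesis by (simp add: zeta_def)
qed

lemma zeta_antimono: "j \<le> j' \<Longrightarrow> zeta n lam j' \<le> zeta n lam j"
  unfolding zeta_def by (rule card_mono) auto

lemma zeta_pos:
  assumes "is_partition n lam" "1 \<le> n" "j \<le> lam 1"
  shows "1 \<le> zeta n lam j"
  using le_zeta_iff[OF assms(1), of 1 j] assms by simp

lemma in_shape_iff: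
  assumes "is_partition n lam"
  shows "in_shape n lam j i \<longleftrightarrow> 1 \<le> j \<and> 1 \<le> i \<and> i \<le> n \<and> j \<le> lam i"
  using le_zeta_iff[OF assms, of i j] zeta_le[of n lam j] partition_antimono[OF assms, of 1 i]
  by (auto simp: in_shape_def)

lemma mem_R_of_iff:
  assumes P: "is_partition n lam" and i: "1 \<le> i" "i < n"
  shows "i \<in> R_of n lam \<longleftrightarrow> lam (i+1) < lam i"
proof
  assume "i \<in> R_of n lam"
  then obtain j where "i = zeta n lam j" "zeta n lam j < n"
    by (auto simp: R_of_def)
  then show "lam (i+1) < lam i"
    using le_zeta_iff[OF P, of i j] le_zeta_iff[OF P, of "i+1" j] i by simp
next
  assume drop: "lam (i+1) < lam i"
  have "i \<le> zeta n lam (lam i)" using le_zeta_iff[OF P, of i "lam i"] i by simp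
  moreover have "\<not> i + 1 \<le> zeta n lam (lam i)"
    using le_zeta_iff[OF P, of "i+1" "lam i"] i drop by simp
  ultimately have "zeta n lam (lam i) = i" by simp
  moreover have "lam i \<le> lam 1" using partition_antimono[OF P, of 1 i] i by simp
  ultimately show "i \<in> R_of n lam"
    unfolding R_of_def using drop i by (intro CollectI exI[of _ "lam i"]) auto
qed

lemma R_of_subset:
  assumes "is_partition n lam" "1 \<le> n"
  shows "R_of n lam \<subseteq> {1..<n}"
  using zeta_pos[OF assms] by (auto simp: R_of_def)

lemma finite_R_of: "finite (R_of n lam)"
  by (rule finite_subset[of _ "{..n}"]) (auto simp: R_of_def zeta_le)

lemma exists_descent_step:
  fixes f :: "nat \<Rightarrow> 'a::linorder"
  assumes "x \<le> y" "f y < f x"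
  shows "\<exists>k. x \<le> k \<and> k < y \<and> f (k+1) < f k"
  using assms
proof (induction y rule: dec_induct)
  case (step y)
  show ?case
  proof (cases "f (y+1) < f y")
    case False
    with step obtain k where "x \<le> k \<and> k < y \<and> f (k+1) < f k" by fastforce
    then show ?thesis by (intro exI[of _ k]) simp
  qed (use step in auto)
qed simp

section \<open>Enumerating the carrel bounds\<close>

lemma qq_eq_nth:
  "1 \<le> h \<Longrightarrow> h \<le> card R \<Longrightarrow> qq n R h = sorted_list_of_set R ! (h - 1)"
  by (simp add: qq_def)

lemma qq_mem:
  assumes "finite R" "1 \<le> h" "h \<le> card R"
  shows "qq n R h \<in> R"
  using assms qq_eq_nth[of h R n] nth_mem[of "h - 1" "sorted_list_of_set R"] by simp

lemma qq_Suc_cases: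
  assumes "finite R"
  shows "qq n R (h+1) \<in> R \<or> qq n R (h+1) = n"
  using assms qq_mem[of R "h+1" n] by (auto simp: qq_def)

lemma qq_Suc_le:
  assumes "finite R" "R \<subseteq> {..n}"
  shows "qq n R (h+1) \<le> n"
  using qq_Suc_cases[OF assms(1), of n h] assms(2) by auto

lemma qq_less_Suc:
  assumes "finite R" "R \<subseteq> {..<n}" "1 \<le> h" "h \<le> card R"
  shows "qq n R h < qq n R (h+1)"
proof (cases "h+1 \<le> card R")
  case True
  then show ?thesis
    using assms qq_eq_nth[of h R n] qq_eq_nth[of "h+1" R n]
      sorted_wrt_nth_less[OF strict_sorted_list_of_set, of "h - 1" h R] by simp
next
  case False
  then have "qq n R (h+1) = n" by (simp add: qq_def)
  then show ?thesis using qq_mem[OF assms(1,3,4), of n] assms(2) by auto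
qed

lemma qq_no_between:
  assumes "finite R" "1 \<le> h" "h \<le> card R" "x \<in> R" "qq n R h < x" "x < qq n R (h+1)"
  shows False
proof -
  let ?L = "sorted_list_of_set R"
  obtain m where m: "m < card R" "x = ?L ! m"
    using assms(1,4) by (metis in_set_conv_nth length_sorted_list_of_set set_sorted_list_of_set)
  have le: "?L ! k \<le> ?L ! k'" if "k \<le> k'" "k' < card R" for k k'
    using sorted_nth_mono[OF sorted_sorted_list_of_set that(1)] that(2) by simp
  show False
  proof (cases "m < h")
    case True
    then have "?L ! m \<le> ?L ! (h - 1)" using assms(3) by (intro le) auto
    then show False using assms(2,3,5) m qq_eq_nth[of h R n] by simp
  next
    case False
    then show False using le[of h m] assms(6) m by (simp add: qq_def)
  qed
qed

lemma qq_surj: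
  assumes "finite R" "x \<in> R"
  shows "\<exists>h \<in> {1..card R}. qq n R h = x"
proof -
  obtain m where "m < card R" "x = sorted_list_of_set R ! m"
    using assms by (metis in_set_conv_nth length_sorted_list_of_set set_sorted_list_of_set)
  then show ?thesis by (intro bexI[of _ "m+1"]) (auto simp: qq_def)
qed

lemma qq_Suc_eqI:
  assumes fin: "finite R" and sub: "R \<subseteq> {..<n}" and h: "1 \<le> h" "h \<le> card R"
    and "qq n R h < b" "b \<in> R \<or> b = n"
    and between: "\<And>x. x \<in> R \<Longrightarrow> qq n R h < x \<Longrightarrow> x < b \<Longrightarrow> False"
  shows "qq n R (h+1) = b"
proof (rule ccontr)
  assume "qq n R (h+1) \<noteq> b"
  then consider "qq n R (h+1) < b" | "b < qq n R (h+1)" by linarith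
  then show False
  proof cases
    case 1
    then show False
      using between qq_Suc_cases[OF fin, of n h] qq_less_Suc[OF fin sub h] sub assms(6) by auto
  next
    case 2
    have "R \<subseteq> {..n}" using sub by auto
    then show False
      using 2 qq_no_between[OF fin h, of b] qq_Suc_le[OF fin, of n h] assms(5,6) by auto
  qed
qed

section \<open>Maximal columns\<close>

definition min_excess :: "(nat \<Rightarrow> nat) \<Rightarrow> nat \<Rightarrow> nat \<Rightarrow> nat" where
  "min_excess g m i = Min ((\<lambda>k. g k - k) ` {i..m})"

text \<open>The largest entry that row \<open>i\<close> of a strictly increasing column of length \<open>m\<close> can hold
  when the entry in each row \<open>k\<close> is at most \<open>g k\<close>.\<close>

definition max_col :: "(nat \<Rightarrow> nat) \<Rightarrow> nat \<Rightarrow> nat \<Rightarrow> nat" where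
  "max_col g m i = i + min_excess g m i"

lemma min_excess_le: "i \<le> k \<Longrightarrow> k \<le> m \<Longrightarrow> min_excess g m i \<le> g k - k"
  unfolding min_excess_def by (rule Min_le) auto

lemma min_excess_greatest:
  "i \<le> m \<Longrightarrow> (\<And>k. i \<le> k \<Longrightarrow> k \<le> m \<Longrightarrow> c \<le> g k - k) \<Longrightarrow> c \<le> min_excess g m i"
  unfolding min_excess_def by (subst Min_ge_iff) auto

lemma min_excess_mono: "i \<le> i' \<Longrightarrow> i' \<le> m \<Longrightarrow> min_excess g m i \<le> min_excess g m i'"
  by (rule min_excess_greatest) (simp_all add: min_excess_le)

lemma min_excess_antimono: "i \<le> m \<Longrightarrow> m \<le> m' \<Longrightarrow> min_excess g m' i \<le> min_excess g m i"
  by (rule min_excess_greatest) (simp_all add: min_excess_le)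

lemma min_excess_split:
  assumes "i \<le> a" "a < b"
  shows "min_excess g b i = min (min_excess g a i) (min_excess g b (a+1))"
proof -
  have "{i..b} = {i..a} \<union> {a+1..b}" using assms by auto
  then show ?thesis unfolding min_excess_def using assms by (simp add: image_Un Min_Un)
qed

lemma max_col_ge: "i \<le> max_col g m i"
  by (simp add: max_col_def)

lemma max_col_step: "i \<le> i' \<Longrightarrow> i' \<le> m \<Longrightarrow> max_col g m i + (i' - i) \<le> max_col g m i'"
  using min_excess_mono[of i i' m g] by (simp add: max_col_def)

lemma max_col_antimono: "i \<le> m \<Longrightarrow> m \<le> m' \<Longrightarrow> max_col g m' i \<le> max_col g m i"
  using min_excess_antimono[of i m m' g] by (simp add: max_col_def)

lemma max_col_bound: "i \<le> k \<Longrightarrow> k \<le> m \<Longrightarrow> k \<le> g k \<Longrightarrow> max_col g m i + (k - i) \<le> g k"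
  using min_excess_le[of i k m g] by (simp add: max_col_def)

lemma max_col_eqI:
  assumes "i \<le> m" "i \<le> g i" "\<And>k. i \<le> k \<Longrightarrow> k \<le> m \<Longrightarrow> g i + (k - i) \<le> g k"
  shows "max_col g m i = g i"
proof -
  have "min_excess g m i = g i - i"
    using assms by (intro antisym min_excess_le min_excess_greatest) (fastforce+)
  then show ?thesis using assms(2) by (simp add: max_col_def)
qed

lemma max_col_split:
  "i \<le> a \<Longrightarrow> a < b \<Longrightarrow> max_col g b i = min (max_col g a i) (i + min_excess g b (a+1))"
  using min_excess_split[of i a b g] by (simp add: max_col_def)

lemma incr_add_le:
  fixes g :: "nat \<Rightarrow> nat"
  assumes incr: "\<And>k. a < k \<Longrightarrow> k < b \<Longrightarrow> g k < g (k+1)" and "a < i" "i \<le> k" "k \<le> b"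
  shows "g i + (k - i) \<le> g k"
  using assms(3,4)
proof (induction k rule: dec_induct)
  case (step k)
  then show ?case using incr[of k] assms(2) by simp
qed simp

section \<open>Two consecutive carrel bounds\<close>

text \<open>Here \<open>a < b\<close> are consecutive elements \<open>q\<^sub>h < q\<^sub>h\<^sub>+\<^sub>1\<close> of \<open>R \<union> {n}\<close>, and
  \<open>drop\<close> is the gapless condition at \<open>q\<^sub>h\<close>: since \<open>g\<close> increases strictly on the carrel,
  it is enough that the value \<open>g a\<close> is reached exactly \<open>g a - g (a+1)\<close> steps after \<open>a + 1\<close>.\<close>

locale carrel_boundary =
  fixes g :: "nat \<Rightarrow> nat" and a b :: nat
  assumes a_pos: "1 \<le> a" and a_less: "a < b"
    and upper: "\<And>k. 1 \<le> k \<Longrightarrow> k \<le> b \<Longrightarrow> k \<le> g k"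
    and incr: "\<And>k. a < k \<Longrightarrow> k < b \<Longrightarrow> g k < g (k+1)"
    and drop: "g (a+1) \<le> g a \<Longrightarrow> a + (g a - g (a+1)) < b \<and> g (a + (g a - g (a+1)) + 1) = g a"
begin

definition offset :: nat where
  "offset = g (a+1) - (a+1)"

lemma g_add_le: "a < i \<Longrightarrow> i \<le> k \<Longrightarrow> k \<le> b \<Longrightarrow> g i + (k - i) \<le> g k"
  using incr_add_le[where a = a and b = b and g = g, OF incr] .

lemma g_Suc_a: "g (a+1) = a + 1 + offset"
  using upper[of "a+1"] a_less by (simp add: offset_def)

lemma max_col_a: "max_col g a a = g a"
  using upper[of a] a_pos a_less by (intro max_col_eqI) auto

lemma g_a_in_col_a: "g a \<in> max_col g a ` {1..a}"
  using max_col_a a_pos by (intro image_eqI[of _ _ a]) auto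

lemma max_col_high: "a < i \<Longrightarrow> i \<le> b \<Longrightarrow> max_col g b i = g i"
  using upper[of i] g_add_le[of i] by (intro max_col_eqI) auto

lemma max_col_low: "i \<le> a \<Longrightarrow> max_col g b i = min (max_col g a i) (i + offset)"
  using max_col_split[OF _ a_less, of i g] max_col_high[of "a+1"] a_less g_Suc_a
  by (simp add: max_col_def)

lemma max_col_below_g_a: "i \<le> a \<Longrightarrow> max_col g a i + (a - i) \<le> g a"
  using max_col_bound[of i a a g] upper[of a] a_pos a_less by simp

lemma max_col_low_rise: "g a < g (a+1) \<Longrightarrow> i \<le> a \<Longrightarrow> max_col g b i = max_col g a i"
  using max_col_low[of i] max_col_below_g_a[of i] g_Suc_a by simp

definition run_end :: nat where
  "run_end = a + (g a - g (a+1)) + 1"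

context
  assumes falls: "g (a+1) \<le> g a"
begin

lemma run_end_le: "run_end \<le> b" and g_run_end: "g run_end = g a"
  using drop[OF falls] by (simp_all add: run_end_def)

lemma g_a_eq: "g a = run_end + offset"
  using falls g_Suc_a by (simp add: run_end_def)

lemma g_fill:
  assumes "a < i" "i \<le> run_end"
  shows "g i = i + offset"
proof (rule antisym)
  show "g i \<le> i + offset"
    using g_add_le[of i run_end] assms run_end_le g_run_end g_a_eq by simp
  show "i + offset \<le> g i"
    using g_add_le[of "a+1" i] assms run_end_le g_Suc_a by simp
qed

lemma max_col_fill:
  assumes "i \<le> i'" "i' + offset \<le> g a" "max_col g b i = i + offset"
  shows "max_col g b i' = i' + offset"
proof (cases "i' \<le> a")
  case True
  have "i + offset \<le> max_col g a i" using assms(1,3) True max_col_low[of i] by simp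
  then have "i' + offset \<le> max_col g a i'" using max_col_step[of i i' a g] assms(1) True by simp
  then show ?thesis using max_col_low[OF True] by simp
next
  case False
  have "i' \<le> run_end" using assms(2) g_a_eq by simp
  then have "max_col g b i' = g i'" using False run_end_le by (intro max_col_high) auto
  also have "\<dots> = i' + offset" using False \<open>i' \<le> run_end\<close> by (intro g_fill) auto
  finally show ?thesis .
qed

end

lemma columns_nested: "max_col g a ` {1..a} \<subseteq> max_col g b ` {1..b}"
proof
  fix x assume "x \<in> max_col g a ` {1..a}"
  then obtain i where i: "i \<in> {1..a}" "x = max_col g a i" by blast
  show "x \<in> max_col g b ` {1..b}"
  proof (cases "g (a+1) \<le> g a \<and> i + offset < x")
    case True
    then have "max_col g b (x - offset) = x"
      using max_col_fill[of i "x - offset"] max_col_low[of i] max_col_below_g_a[of i] i by auto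
    moreover have "x - offset \<le> b"
      using True max_col_below_g_a[of i] i g_a_eq run_end_le by auto
    ultimately show ?thesis using True i by (intro image_eqI[of _ _ "x - offset"]) auto
  next
    case False
    then have "max_col g b i = x" using max_col_low[of i] max_col_low_rise[of i] i by auto
    then show ?thesis using i a_less by (intro image_eqI[of _ _ i]) auto
  qed
qed

lemma new_entries_above_gaps:
  assumes x: "x \<in> max_col g b ` {1..b} - max_col g a ` {1..a}" "x < g a"
    and y: "y \<le> g a" "y \<notin> max_col g b ` {1..b}"
  shows "y < x"
proof -
  obtain i where i: "i \<in> {1..b}" "x = max_col g b i" using x by blast
  have falls: "g (a+1) \<le> g a"
  proof (rule ccontr)
    assume rise: "\<not> g (a+1) \<le> g a"
    show False
    proof (cases "i \<le> a")
      case True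
      then show False using max_col_low_rise[of i] rise i x by auto
    next
      case False
      then show False using max_col_high[of i] g_add_le[of "a+1" i] i x rise by simp
    qed
  qed
  have x_fill: "max_col g b i = i + offset"
  proof (cases "i \<le> a")
    case True
    then show ?thesis using max_col_low[of i] i x by (auto simp: min_def split: if_splits)
  next
    case False
    have "i < run_end"
    proof (rule ccontr)
      assume "\<not> i < run_end"
      moreover have "a < run_end" using falls by (simp add: run_end_def)
      ultimately have "g a \<le> g i"
        using g_add_le[of run_end i] g_run_end[OF falls] i by simp
      then show False using max_col_high[of i] i x False by simp
    qed
    then show ?thesis using max_col_high[of i] g_fill[OF falls, of i] False i by simp
  qed
  show "y < x"
  proof (rule ccontr)
    assume "\<not> y < x"
    then have "max_col g b (y - offset) = y" and "y - offset \<in> {1..b}"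
      using max_col_fill[OF falls, of i "y - offset"] x_fill i y(1) g_a_eq[OF falls]
        run_end_le[OF falls] x(2) by auto
    then show False using y(2) by force
  qed
qed

end

section \<open>Carrel bounds and column lengths\<close>

lemma gapless_carrel_boundary:
  assumes G: "gapless n R g" and fin: "finite R" and sub: "R \<subseteq> {1..<n}"
    and h: "h \<in> {1..card R}"
  shows "carrel_boundary g (qq n R h) (qq n R (h+1))"
proof -
  define a b where "a = qq n R h" and "b = qq n R (h+1)"
  have sub': "R \<subseteq> {..<n}" "R \<subseteq> {..n}" using sub by auto
  have aR: "a \<in> R" using qq_mem[OF fin] h by (simp add: a_def)
  have ab: "a < b" using qq_less_Suc[OF fin sub'(1)] h by (simp add: a_def b_def)
  have bn: "b \<le> n" using qq_Suc_le[OF fin sub'(2)] by (simp add: b_def)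
  have upper: "k \<le> g k" if "1 \<le> k" "k \<le> b" for k
    using G that bn by (auto simp: gapless_def upper_tuple_def)
  show ?thesis
    unfolding a_def[symmetric] b_def[symmetric]
  proof
    show "1 \<le> a" "a < b" using aR sub ab by auto
    show "k \<le> g k" if "1 \<le> k" "k \<le> b" for k using upper that .
    show "g k < g (k+1)" if "a < k" "k < b" for k
    proof -
      have "k \<notin> R" using qq_no_between[OF fin, of h k n] h that by (auto simp: a_def b_def)
      then show ?thesis using G that aR sub bn by (auto simp: gapless_def R_increasing_def)
    qed
    assume falls: "g (a+1) \<le> g a"
    show "a + (g a - g (a+1)) < b \<and> g (a + (g a - g (a+1)) + 1) = g a"
    proof (cases "g (a+1) = g a")
      case False
      define s where "s = g a - g (a+1) + 1"
      have gap: "s \<le> pp n R (h+1) \<and> (\<forall>t \<in> {1..s}. g (a + t) = g a - s + t)"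
        using G h falls False unfolding gapless_def s_def a_def by (auto simp: Let_def)
      have "pp n R (h+1) = b - a" unfolding pp_def a_def b_def by simp
      moreover have "g (a + s) = g a - s + s"
        using gap by (metis add_leE atLeastAtMost_iff dual_order.refl s_def)
      moreover have "s \<le> g a" using upper[of "a+1"] ab falls by (simp add: s_def)
      ultimately show ?thesis using gap ab unfolding s_def by auto
    qed (use ab in simp)
  qed
qed

lemma carrel_end_columns:
  assumes P: "is_partition n lam" and n1: "1 \<le> n" and h: "h \<in> {1..card (R_of n lam)}"
    and a_def: "a = qq n (R_of n lam) h" and b_def: "b = qq n (R_of n lam) (h+1)"
  shows "zeta n lam (lam b) = b" "zeta n lam (lam b + 1) = a" "lam b + 1 \<le> lam 1"
proof -
  let ?R = "R_of n lam"
  have sub: "?R \<subseteq> {1..<n}" "?R \<subseteq> {..<n}" "?R \<subseteq> {..n}" using R_of_subset[OF P n1] by auto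
  have aR: "a \<in> ?R" using qq_mem[OF finite_R_of] h by (simp add: a_def)
  have a: "1 \<le> a" "a < n" using aR sub by auto
  have ab: "a < b" using qq_less_Suc[OF finite_R_of sub(2)] h by (simp add: a_def b_def)
  have bn: "b \<le> n" using qq_Suc_le[OF finite_R_of sub(3)] by (simp add: b_def)
  have drop_a: "lam (a+1) < lam a" using mem_R_of_iff[OF P a] aR by simp
  have flat: "lam (a+1) = lam b"
  proof (rule ccontr)
    assume "lam (a+1) \<noteq> lam b"
    then have "lam b < lam (a+1)" using partition_antimono[OF P, of "a+1" b] ab bn by simp
    then obtain k where k: "a+1 \<le> k" "k < b" "lam (k+1) < lam k"
      using exists_descent_step[where f = lam, of "a+1" b] ab by auto
    then have "k \<in> ?R" using mem_R_of_iff[OF P, of k] bn by simp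
    then show False using qq_no_between[OF finite_R_of[of n lam], of h k n] h k by (auto simp: a_def b_def)
  qed
  have b_end: "\<not> b + 1 \<le> zeta n lam (lam b)"
  proof
    assume "b + 1 \<le> zeta n lam (lam b)"
    moreover from this have "b \<in> ?R" "b < n"
      using qq_Suc_cases[OF finite_R_of[of n lam], of n h] zeta_le[of n lam "lam b"] by (auto simp: b_def)
    ultimately show False using le_zeta_iff[OF P, of "b+1" "lam b"] mem_R_of_iff[OF P, of b] ab
      by simp
  qed
  show "zeta n lam (lam b) = b"
    using le_zeta_iff[OF P, of b "lam b"] ab bn b_end by simp
  show "zeta n lam (lam b + 1) = a"
    using le_zeta_iff[OF P, of a "lam b + 1"] le_zeta_iff[OF P, of "a+1" "lam b + 1"]
      a drop_a flat by simp
  show "lam b + 1 \<le> lam 1" using partition_antimono[OF P, of 1 a] a drop_a flat by simp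
qed

lemma column_lengths_carrel_bounds:
  assumes P: "is_partition n lam" and n1: "1 \<le> n"
    and j: "1 \<le> j" "j + 1 \<le> lam 1" and shorter: "zeta n lam (j+1) < zeta n lam j"
  obtains h where "h \<in> {1..card (R_of n lam)}"
    "qq n (R_of n lam) h = zeta n lam (j+1)" "qq n (R_of n lam) (h+1) = zeta n lam j"
proof -
  let ?R = "R_of n lam"
  define a b where "a = zeta n lam (j+1)" and "b = zeta n lam j"
  have bn: "b \<le> n" by (simp add: b_def zeta_le)
  have aR: "a \<in> ?R" unfolding R_of_def using j shorter bn by (auto simp: a_def b_def)
  obtain h where h: "h \<in> {1..card ?R}" "qq n ?R h = a" using qq_surj[OF finite_R_of aR] by blast
  have a1: "1 \<le> a" using zeta_pos[OF P n1 j(2)] by (simp add: a_def)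
  have bR: "b \<in> ?R \<or> b = n" using j bn by (auto simp: R_of_def b_def)
  have between: "False" if "k \<in> ?R" "a < k" "k < b" for k
  proof -
    have "j \<le> lam (k+1)" using le_zeta_iff[OF P, of "k+1" j] that bn by (simp add: b_def)
    moreover have "\<not> j + 1 \<le> lam k" using le_zeta_iff[OF P, of k "j+1"] that bn a1 by (simp add: a_def)
    ultimately show False using mem_R_of_iff[OF P, of k] that a1 bn by simp
  qed
  have "qq n ?R (h+1) = b"
  proof (rule qq_Suc_eqI[OF finite_R_of])
    show "?R \<subseteq> {..<n}" using R_of_subset[OF P n1] by auto
    show "qq n ?R h < b" using h shorter by (simp add: a_def b_def)
  qed (use h bR between in auto)
  then show ?thesis using that h by (simp add: a_def b_def)
qed

section \<open>The row end max tableau\<close>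

definition max_tableau :: "nat \<Rightarrow> (nat \<Rightarrow> nat) \<Rightarrow> (nat \<Rightarrow> nat) \<Rightarrow> nat \<Rightarrow> nat \<Rightarrow> nat" where
  "max_tableau n lam g j i = (if in_shape n lam j i then max_col g (zeta n lam j) i
     else if j = 0 \<and> 1 \<le> i \<and> i \<le> n then i else 0)"

lemma upper_tupleD: "upper_tuple n g \<Longrightarrow> 1 \<le> i \<Longrightarrow> i \<le> n \<Longrightarrow> i \<le> g i \<and> g i \<le> n"
  unfolding upper_tuple_def by auto

lemma R_increasing_within_row_length:
  assumes P: "is_partition n lam" and Ri: "R_increasing n (R_of n lam) g"
    and "1 \<le> i" "i \<le> k" "k \<le> n" "lam k = lam i"
  shows "g i + (k - i) \<le> g k"
proof (rule incr_add_le[of "i - 1" k g])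
  fix m assume m: "i - 1 < m" "m < k"
  then have "i \<le> m" using assms(3) by simp
  then have "lam (m+1) = lam m"
    using partition_antimono[OF P, of m "m+1"] partition_antimono[OF P, of i m]
      partition_antimono[OF P, of "m+1" k] m assms(3-6) by fastforce
  then have "m \<notin> R_of n lam" using mem_R_of_iff[OF P, of m] m assms(3,5) by simp
  then show "g m < g (m+1)" using Ri m assms(3,5) unfolding R_increasing_def by simp
qed (use assms in auto)

lemma tableau_max_tableau:
  assumes P: "is_partition n lam" and U: "upper_tuple n g"
  shows "tableau n lam (max_tableau n lam g)"
  unfolding tableau_def
proof (intro conjI allI impI)
  fix j i assume "\<not> in_shape n lam j i"
  then show "max_tableau n lam g j i = (if j = 0 \<and> 1 \<le> i \<and> i \<le> n then i else 0)"
    by (simp add: max_tableau_def)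
next
  fix j i assume s: "in_shape n lam j i"
  then have i: "1 \<le> i" "i \<le> n" "i \<le> zeta n lam j" using in_shape_iff[OF P] in_shape_def by auto
  then have "max_col g (zeta n lam j) i \<le> g i"
    using max_col_bound[of i i "zeta n lam j" g] upper_tupleD[OF U] by simp
  then show "max_tableau n lam g j i \<in> {1..n}"
    using s i upper_tupleD[OF U i(1,2)] max_col_ge[of i g "zeta n lam j"]
    by (auto simp: max_tableau_def)
next
  fix j i assume "in_shape n lam j i \<and> in_shape n lam j (i+1)"
  then show "max_tableau n lam g j i < max_tableau n lam g j (i+1)"
    using max_col_step[of i "i+1" "zeta n lam j" g] by (simp add: max_tableau_def in_shape_def)
next
  fix j i assume "in_shape n lam j i \<and> in_shape n lam (j+1) i"
  then show "max_tableau n lam g j i \<le> max_tableau n lam g (j+1) i"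
    using max_col_antimono[OF _ zeta_antimono, of i n lam "j+1" j g]
    by (simp add: max_tableau_def in_shape_def)
qed

lemma row_end_is_max_tableau:
  assumes P: "is_partition n lam" and U: "upper_tuple n g" and Ri: "R_increasing n (R_of n lam) g"
  shows "row_end_is n lam (max_tableau n lam g) g"
  unfolding row_end_is_def
proof
  fix i assume i: "i \<in> {1..n}"
  show "max_tableau n lam g (lam i) i = g i"
  proof (cases "lam i = 0")
    case True
    then have "g i + (n - i) \<le> g n"
      using R_increasing_within_row_length[OF P Ri, of i n] partition_antimono[OF P, of i n] i
      by simp
    moreover have "i \<le> n" "g n \<le> n" "i \<le> g i"
      using upper_tupleD[OF U, of n] upper_tupleD[OF U, of i] i by auto
    ultimately have "g i = i" by linarith
    then show ?thesis using True i by (simp add: max_tableau_def in_shape_def)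
  next
    case False
    then have s: "in_shape n lam (lam i) i" using in_shape_iff[OF P] i by simp
    have "max_col g (zeta n lam (lam i)) i = g i"
    proof (rule max_col_eqI)
      show "i \<le> zeta n lam (lam i)" "i \<le> g i" using s upper_tupleD[OF U] i by (auto simp: in_shape_def)
      fix k assume k: "i \<le> k" "k \<le> zeta n lam (lam i)"
      then have "k \<le> n" using zeta_le[of n lam "lam i"] by simp
      then have "lam k = lam i"
        using le_zeta_iff[OF P, of k "lam i"] partition_antimono[OF P, of i k] k i by simp
      then show "g i + (k - i) \<le> g k"
        using R_increasing_within_row_length[OF P Ri, of i k] i k \<open>k \<le> n\<close> by simp
    qed
    then show ?thesis using s by (simp add: max_tableau_def)
  qed
qed

lemma tableau_col_add_le:
  assumes T: "tableau n lam T" and "in_shape n lam j k" "i \<le> k" "1 \<le> i"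
  shows "T j i + (k - i) \<le> T j k"
  using assms(3,2)
proof (induction k rule: dec_induct)
  case (step k)
  then have "in_shape n lam j k" "in_shape n lam j (k+1)"
    using assms(4) by (auto simp: in_shape_def)
  then show ?case using step T unfolding tableau_def by fastforce
qed simp

lemma tableau_row_mono:
  assumes P: "is_partition n lam" and T: "tableau n lam T"
    and "in_shape n lam j i" "j \<le> j'" "j' \<le> lam i"
  shows "T j i \<le> T j' i"
  using assms(4,5)
proof (induction j' rule: dec_induct)
  case (step j')
  then have "in_shape n lam j' i" "in_shape n lam (j'+1) i"
    using assms(3) in_shape_iff[OF P] by auto
  then show ?case using step T unfolding tableau_def by fastforce
qed simp

lemma tab_le_max_tableau:
  assumes P: "is_partition n lam" and T: "tableau n lam T" and re: "row_end_is n lam T g"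
  shows "tab_le T (max_tableau n lam g)"
  unfolding tab_le_def
proof (intro allI)
  fix j i
  show "T j i \<le> max_tableau n lam g j i"
  proof (cases "in_shape n lam j i")
    case False
    then show ?thesis using T by (simp add: tableau_def max_tableau_def)
  next
    case True
    then have i: "1 \<le> i" "i \<le> zeta n lam j" by (auto simp: in_shape_def)
    have "T j i - i \<le> min_excess g (zeta n lam j) i"
    proof (rule min_excess_greatest[OF i(2)])
      fix k assume k: "i \<le> k" "k \<le> zeta n lam j"
      then have sk: "in_shape n lam j k" using True by (simp add: in_shape_def)
      then have "k \<in> {1..n}" "j \<le> lam k" using in_shape_iff[OF P] by auto
      then have "T j k \<le> g k" using tableau_row_mono[OF P T sk, of "lam k"] re
        by (simp add: row_end_is_def)
      then show "T j i - i \<le> g k - k" using tableau_col_add_le[OF T sk k(1) i(1)] k by simp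
    qed
    then show ?thesis using True by (simp add: max_tableau_def max_col_def)
  qed
qed

lemma row_end_max_eq_max_tableau:
  assumes P: "is_partition n lam" and U: "upper_tuple n g" and Ri: "R_increasing n (R_of n lam) g"
  shows "row_end_max n lam g = max_tableau n lam g"
  unfolding row_end_max_def
proof (rule the_equality)
  show "tableau n lam (max_tableau n lam g) \<and> row_end_is n lam (max_tableau n lam g) g \<and>
    (\<forall>T. tableau n lam T \<and> row_end_is n lam T g \<longrightarrow> tab_le T (max_tableau n lam g))"
    using tableau_max_tableau[OF P U] row_end_is_max_tableau[OF P U Ri] tab_le_max_tableau[OF P]
    by blast
next
  fix M assume "tableau n lam M \<and> row_end_is n lam M g \<and>
    (\<forall>T. tableau n lam T \<and> row_end_is n lam T g \<longrightarrow> tab_le T M)"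
  then have "tab_le (max_tableau n lam g) M" "tab_le M (max_tableau n lam g)"
    using tableau_max_tableau[OF P U] row_end_is_max_tableau[OF P U Ri] tab_le_max_tableau[OF P]
    by blast+
  then show "M = max_tableau n lam g" unfolding tab_le_def by (intro ext) (meson antisym)
qed

lemma col_set_max_tableau:
  assumes U: "upper_tuple n g" and "1 \<le> n" "j \<le> lam 1"
  shows "col_set n lam (max_tableau n lam g) j = max_col g (zeta n lam j) ` {1..zeta n lam j}"
proof (cases "j = 0")
  case True
  have "max_col g n i = i" if "i \<in> {1..n}" for i
    using min_excess_le[of i n n g] upper_tupleD[OF U, of n] assms(2) that
    by (simp add: max_col_def)
  then show ?thesis
    unfolding col_set_def True zeta_0 by (intro image_cong) (auto simp: max_tableau_def in_shape_def)
next
  case False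
  then show ?thesis
    unfolding col_set_def using assms(3) by (intro image_cong) (auto simp: max_tableau_def in_shape_def)
qed

lemma is_key_max_tableau:
  assumes P: "is_partition n lam" and n1: "1 \<le> n" and G: "gapless n (R_of n lam) g"
  shows "is_key n lam (max_tableau n lam g)"
proof -
  have U: "upper_tuple n g" using G by (simp add: gapless_def)
  let ?C = "\<lambda>j. col_set n lam (max_tableau n lam g) j"
  have consecutive: "?C (j+1) \<subseteq> ?C j" if j: "1 \<le> j" "j + 1 \<le> lam 1" for j
  proof (cases "zeta n lam (j+1) < zeta n lam j")
    case True
    then obtain h where "h \<in> {1..card (R_of n lam)}"
      "qq n (R_of n lam) h = zeta n lam (j+1)" "qq n (R_of n lam) (h+1) = zeta n lam j"
      using column_lengths_carrel_bounds[OF P n1 j] by blast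
    then have "carrel_boundary g (zeta n lam (j+1)) (zeta n lam j)"
      using gapless_carrel_boundary[OF G finite_R_of R_of_subset[OF P n1]] by metis
    then show ?thesis
      using carrel_boundary.columns_nested col_set_max_tableau[OF U n1] j by simp
  next
    case False
    then show ?thesis using zeta_antimono[of j "j+1" n lam] col_set_max_tableau[OF U n1] j
      by (simp add: le_antisym)
  qed
  have "?C j \<subseteq> ?C l" if "1 \<le> l" "l \<le> j" "j \<le> lam 1" for l j
    using that(2,3)
  proof (induction j rule: dec_induct)
    case (step j)
    then show ?case using consecutive[of j] that(1) by auto
  qed simp
  then show ?thesis using tableau_max_tableau[OF P U] by (simp add: is_key_def)
qed

lemma max_tableau_carrel_bound_columns:
  assumes P: "is_partition n lam" and n1: "1 \<le> n" and G: "gapless n (R_of n lam) g"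
    and h: "h \<in> {1..card (R_of n lam)}"
    and a: "a = qq n (R_of n lam) h" and b: "b = qq n (R_of n lam) (h+1)"
  defines "X \<equiv> {x \<in> col_set n lam (max_tableau n lam g) (lam b)
                      - col_set n lam (max_tableau n lam g) (lam b + 1). x < g a}"
    and "A \<equiv> {1..g a} - col_set n lam (max_tableau n lam g) (lam b + 1)"
  shows "max_tableau n lam g (lam b + 1) a = g a \<and> X \<subseteq> A \<and> (\<forall>x \<in> X. \<forall>y \<in> A - X. y < x)"
proof -
  have U: "upper_tuple n g" using G by (simp add: gapless_def)
  interpret carrel_boundary g a b
    using gapless_carrel_boundary[OF G finite_R_of R_of_subset[OF P n1] h] a b by simp
  note lengths = carrel_end_columns[OF P n1 h a b]
  have cols: "col_set n lam (max_tableau n lam g) (lam b) = max_col g b ` {1..b}"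
    "col_set n lam (max_tableau n lam g) (lam b + 1) = max_col g a ` {1..a}"
    using col_set_max_tableau[OF U n1] lengths by simp_all
  have pos: "1 \<le> x" if "x \<in> max_col g b ` {1..b}" for x
    using that max_col_ge[of _ g b] by (auto intro: order_trans)
  show ?thesis
  proof (intro conjI ballI)
    have "in_shape n lam (lam b + 1) a" using lengths a_pos by (simp add: in_shape_def)
    then show "max_tableau n lam g (lam b + 1) a = g a"
      using lengths(2) max_col_a unfolding max_tableau_def by (simp only: if_True)
    show "X \<subseteq> A"
    proof
      fix x assume "x \<in> X"
      then have "x \<in> max_col g b ` {1..b}" "x \<notin> max_col g a ` {1..a}" "x < g a"
        unfolding X_def cols by simp_all
      then show "x \<in> A" using pos[of x] unfolding A_def cols by simp
    qed
    fix x y assume x: "x \<in> X" and y: "y \<in> A - X"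
    have new: "x \<in> max_col g b ` {1..b} - max_col g a ` {1..a}" "x < g a"
      using x unfolding X_def cols by simp_all
    have "y \<le> g a" "y \<notin> max_col g a ` {1..a}" using y unfolding A_def cols by simp_all
    moreover from this have "y \<noteq> g a" using g_a_in_col_a by blast
    ultimately have "y \<notin> max_col g b ` {1..b}" using y unfolding X_def A_def cols by auto
    then show "y < x" using new_entries_above_gaps[OF new] \<open>y \<le> g a\<close> by blast
  qed
qed

theorem lemma5p1:
  fixes n :: nat and lam gam :: "nat \<Rightarrow> nat"
  assumes "1 \<le> n"
    and "is_partition n lam"
    and "gapless n (R_of n lam) gam"
  shows "is_key n lam (row_end_max n lam gam) \<and>
    (\<forall>h \<in> {1..card (R_of n lam)}.
       let R = R_of n lam; M = row_end_max n lam gam; qh = qq n R h;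
           j = lam (qq n R (h+1));
           X = {x \<in> col_set n lam M j - col_set n lam M (j+1). x < gam qh};
           A = {1..gam qh} - col_set n lam M (j+1)
       in M (j+1) qh = gam qh \<and> X \<subseteq> A \<and> (\<forall>x \<in> X. \<forall>y \<in> A - X. y < x))"
proof -
  have U: "upper_tuple n gam" and Ri: "R_increasing n (R_of n lam) gam"
    using assms(3) by (auto simp: gapless_def)
  show ?thesis
    unfolding row_end_max_eq_max_tableau[OF assms(2) U Ri] Let_def
    by (rule conjI[OF is_key_max_tableau[OF assms(2,1,3)]], rule ballI,
        erule max_tableau_carrel_bound_columns[OF assms(2,1,3) _ refl refl])
qed

end
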